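(* Let $p\in(0,1)$ and $\Phi(a,s)=p(1-p)(2-s)^2(s-a)-a(1-s)$. Let $f(x)=(2-x)^{2-x}p(1-p)^{1-x}(1-x)^{x-1}$ for $x\le1$ (with $0^0=1$). (a) For each $a\in[0,1]$ there is a unique $s\in[a,1]$ with $\Phi(a,s)=0$; denote it $\phi(a)$. If $a\in\{0,1\}$ then $\phi(a)=a$; if $a\in(0,1)$ then $0<a<\phi(a)<1$. (b) For $a\in(0,1)$, if $s=\phi(a)$ then $\dfrac{s f(s)^{a/s}}{a^{a/s}(s-a)^{1-a/s}}=\dfrac{s}{s-a}\left(\dfrac{1-s}{(1-p)(2-s)}\right)^a$. (c) $\phi$ is increasing on $[0,1]$ and differentiable on $(0,1)$. (d) $\phi$ is invertible and $\phi^{-1}$ is increasing; if $s\in\{0,1\}$ then $\phi^{-1}(s)=s$; if $s\in(0,1)$ then $0<\phi^{-1}(s)<s<1$. *)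

theory Defs
  imports Complex_Main
begin

definition rpow :: "real \<Rightarrow> real \<Rightarrow> real" where
  "rpow b e = (if b = 0 then (if e = 0 then 1 else 0) else b powr e)"

definition Phi :: "real \<Rightarrow> real \<Rightarrow> real \<Rightarrow> real" where
  "Phi p a s = p * (1 - p) * (2 - s)^2 * (s - a) - a * (1 - s)"

definition f :: "real \<Rightarrow> real \<Rightarrow> real" where
  "f p x = rpow (2 - x) (2 - x) * p * rpow (1 - p) (1 - x) * rpow (1 - x) (x - 1)"

definition phi :: "real \<Rightarrow> real \<Rightarrow> real" where
  "phi p a = (THE s. s \<in> {a..1} \<and> Phi p a s = 0)"

end

theory Submission
  imports Defs
begin

text \<open>\<open>Phi p a s\<close> is affine in \<open>a\<close>, so \<open>Phi p a s = 0\<close> can be solved for \<open>a\<close>: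
  \<open>a = psi q s\<close> with \<open>q = p (1 - p)\<close>. The function \<open>psi q\<close> has positive derivative on \<open>s \<le> 1\<close>,
  fixes 0 and 1 and lies strictly below the diagonal on \<open>(0, 1)\<close>; hence it is an increasing
  bijection of \<open>[0, 1]\<close> whose inverse is \<open>phi p\<close>, and \<open>phi p\<close> is differentiable by the inverse
  function theorem. Part (b) becomes an identity between logarithms once the root equation is
  used to eliminate \<open>ln (s - a)\<close>.\<close>

definition psi :: "real \<Rightarrow> real \<Rightarrow> real" where
  "psi q s = q * (2 - s)^2 * s / (q * (2 - s)^2 + 1 - s)"

lemma psi_denominator_pos:
  fixes q s :: real
  assumes "0 < q" "s \<le> 1"
  shows "0 < q * (2 - s)^2 + 1 - s"
proof -
  have "0 < q * (2 - s)^2" using assms by simp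
  then show ?thesis using assms(2) by linarith
qed

lemma psi_has_real_derivative:
  fixes q s :: real
  assumes "0 < q" "s \<le> 1"
  shows "(psi q has_real_derivative
           q * (2 - s) * (q * (2 - s)^3 + 2 - 3 * s + 2 * s^2) / (q * (2 - s)^2 + 1 - s)^2) (at s)"
proof -
  have "(psi q has_real_derivative
          ((q * (2 * (2 - s) * -1) * s + q * (2 - s)^2) * (q * (2 - s)^2 + 1 - s)
           - q * (2 - s)^2 * s * (q * (2 * (2 - s) * -1) - 1)) / (q * (2 - s)^2 + 1 - s)^2) (at s)"
    unfolding psi_def[abs_def] using psi_denominator_pos[OF assms]
    by (auto intro!: derivative_eq_intros simp: power2_eq_square algebra_simps)
  moreover have "(q * (2 * (2 - s) * -1) * s + q * (2 - s)^2) * (q * (2 - s)^2 + 1 - s)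
           - q * (2 - s)^2 * s * (q * (2 * (2 - s) * -1) - 1)
         = q * (2 - s) * (q * (2 - s)^3 + 2 - 3 * s + 2 * s^2)"
    by (simp add: algebra_simps power2_eq_square power3_eq_cube)
  ultimately show ?thesis by simp
qed

lemma psi_derivative_pos:
  fixes q s :: real
  assumes "0 < q" "s \<le> 1"
  shows "0 < q * (2 - s) * (q * (2 - s)^3 + 2 - 3 * s + 2 * s^2) / (q * (2 - s)^2 + 1 - s)^2"
proof -
  have "2 - 3 * s + 2 * s^2 = 2 * (s - 3/4)^2 + 7/8" by (simp add: algebra_simps power2_eq_square)
  then have "0 < 2 - 3 * s + 2 * s^2" using zero_le_power2[of "s - 3/4"] by linarith
  moreover have "0 < q * (2 - s)^3" using assms by simp
  ultimately have "0 < q * (2 - s)^3 + 2 - 3 * s + 2 * s^2" by linarith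
  moreover have "0 < q * (2 - s)" using assms by simp
  ultimately show ?thesis using psi_denominator_pos[OF assms] by simp
qed

lemma psi_strict_mono_on:
  assumes "0 < q"
  shows "strict_mono_on {..1} (psi q)"
proof (rule strict_mono_onI)
  fix r t :: real
  assume "r \<in> {..1}" "t \<in> {..1}" "r < t"
  show "psi q r < psi q t"
  proof (rule DERIV_pos_imp_increasing[OF \<open>r < t\<close>])
    fix s assume "r \<le> s" "s \<le> t"
    with \<open>t \<in> {..1}\<close> have "s \<le> 1" by simp
    then show "\<exists>D. (psi q has_real_derivative D) (at s) \<and> 0 < D"
      using psi_has_real_derivative[OF assms] psi_derivative_pos[OF assms] by blast
  qed
qed

lemma psi_0 [simp]: "psi q 0 = 0"
  by (simp add: psi_def)

lemma psi_1: "0 < q \<Longrightarrow> psi q 1 = 1"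
  by (simp add: psi_def)

lemma psi_less_self:
  fixes q s :: real
  assumes "0 < q" "0 < s" "s < 1"
  shows "psi q s < s"
proof -
  have "q * (2 - s)^2 * s < s * (q * (2 - s)^2 + 1 - s)"
    using assms by (simp add: algebra_simps)
  then show ?thesis
    using psi_denominator_pos[of q s] assms by (simp add: psi_def divide_less_eq)
qed

lemma psi_le_self: "0 < q \<Longrightarrow> s \<in> {0..1} \<Longrightarrow> psi q s \<le> s"
  using psi_less_self[of q s] psi_1[of q] by (cases "s = 0 \<or> s = 1") auto

lemma psi_continuous_on: "0 < q \<Longrightarrow> continuous_on {..1} (psi q)"
  using psi_has_real_derivative DERIV_isCont
  by (intro continuous_at_imp_continuous_on) blast

lemma psi_image:
  assumes "0 < q"
  shows "psi q ` {0..1} = {0..1}"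
proof
  show "psi q ` {0..1} \<subseteq> {0..1}"
    using strict_mono_on_leD[OF psi_strict_mono_on[OF assms]] psi_1[OF assms]
    by (force simp: image_subset_iff)
  show "{0..1} \<subseteq> psi q ` {0..1}"
    using IVT'[of "psi q" 0 _ 1] psi_1[OF assms]
      continuous_on_subset[OF psi_continuous_on[OF assms], of "{0..1}"]
    by (force simp: image_iff)
qed

lemma psi_bij_betw:
  assumes "0 < q"
  shows "bij_betw (psi q) {0..1} {0..1}"
  using strict_mono_on_imp_inj_on[OF monotone_on_subset[OF psi_strict_mono_on[OF assms]]]
    psi_image[OF assms]
  by (auto simp: bij_betw_def)

lemma rpow_of_pos [simp]: "0 < b \<Longrightarrow> rpow b e = b powr e"
  by (simp add: rpow_def)

context
  fixes p :: real
  assumes p_pos: "0 < p" and p_less_1: "p < 1"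
begin

private lemma q_pos: "0 < p * (1 - p)"
  using p_pos p_less_1 by simp

lemma Phi_eq_0_iff: "s \<le> 1 \<Longrightarrow> Phi p a s = 0 \<longleftrightarrow> a = psi (p * (1 - p)) s"
proof -
  assume "s \<le> 1"
  then have den: "0 < p * (1 - p) * (2 - s)^2 + 1 - s"
    by (rule psi_denominator_pos[OF q_pos])
  have "Phi p a s = p * (1 - p) * (2 - s)^2 * s - a * (p * (1 - p) * (2 - s)^2 + 1 - s)"
    unfolding Phi_def by (simp add: algebra_simps)
  with den show ?thesis
    unfolding psi_def by (auto simp: field_simps)
qed

lemma Phi_root_iff:
  assumes "a \<in> {0..1}"
  shows "s \<in> {a..1} \<and> Phi p a s = 0 \<longleftrightarrow> s \<in> {0..1} \<and> psi (p * (1 - p)) s = a"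
  using assms Phi_eq_0_iff psi_le_self[OF q_pos, of s] by auto

lemma ex1_Phi_root:
  assumes "a \<in> {0..1}"
  shows "\<exists>!s. s \<in> {a..1} \<and> Phi p a s = 0"
  unfolding Phi_root_iff[OF assms]
proof -
  obtain s where s: "s \<in> {0..1}" "psi (p * (1 - p)) s = a"
    using assms psi_image[OF q_pos] by (metis imageE)
  have "inj_on (psi (p * (1 - p))) {0..1}"
    using psi_bij_betw[OF q_pos] by (rule bij_betw_imp_inj_on)
  with s show "\<exists>!s. s \<in> {0..1} \<and> psi (p * (1 - p)) s = a"
    by (metis inj_onD)
qed

lemma phi_mem_psi_phi:
  assumes "a \<in> {0..1}"
  shows "phi p a \<in> {0..1} \<and> psi (p * (1 - p)) (phi p a) = a"
  using theI'[OF ex1_Phi_root[OF assms]] Phi_root_iff[OF assms] by (simp add: phi_def)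

lemma Phi_phi: "a \<in> {0..1} \<Longrightarrow> Phi p a (phi p a) = 0"
  using phi_mem_psi_phi Phi_eq_0_iff by simp

lemma phi_psi:
  assumes s: "s \<in> {0..1}"
  shows "phi p (psi (p * (1 - p)) s) = s"
proof -
  have a: "psi (p * (1 - p)) s \<in> {0..1}"
    using psi_image[OF q_pos] s by blast
  show ?thesis
    unfolding phi_def using s
    by (intro the1_equality[OF ex1_Phi_root[OF a]]) (use Phi_root_iff[OF a] in blast)
qed

lemma phi_strict_mono_on: "strict_mono_on {0..1} (phi p)"
proof (rule strict_mono_onI)
  fix r s :: real assume "r \<in> {0..1}" "s \<in> {0..1}" "r < s"
  then show "phi p r < phi p s"
    using phi_mem_psi_phi[of r] phi_mem_psi_phi[of s]
      strict_mono_on_less[OF psi_strict_mono_on[OF q_pos], of "phi p r" "phi p s"]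
    by auto
qed

lemma phi_image: "phi p ` {0..1} = {0..1}"
proof
  show "phi p ` {0..1} \<subseteq> {0..1}"
    using phi_mem_psi_phi by blast
  show "{0..1} \<subseteq> phi p ` {0..1}"
  proof
    fix s :: real assume s: "s \<in> {0..1}"
    then have "psi (p * (1 - p)) s \<in> {0..1}"
      using psi_image[OF q_pos] by blast
    with phi_psi[OF s] show "s \<in> phi p ` {0..1}"
      by (metis image_eqI)
  qed
qed

lemma phi_bij_betw: "bij_betw (phi p) {0..1} {0..1}"
  using strict_mono_on_imp_inj_on[OF phi_strict_mono_on] phi_image by (simp add: bij_betw_def)

lemma the_inv_into_phi: "s \<in> {0..1} \<Longrightarrow> the_inv_into {0..1} (phi p) s = psi (p * (1 - p)) s"
  using psi_image[OF q_pos] phi_psi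
  by (intro the_inv_into_f_eq[OF strict_mono_on_imp_inj_on[OF phi_strict_mono_on]]) auto

lemma phi_greater_self:
  assumes "a \<in> {0<..<1}"
  shows "a < phi p a \<and> phi p a < 1"
proof -
  have phi: "phi p a \<in> {0..1}" "psi (p * (1 - p)) (phi p a) = a"
    using phi_mem_psi_phi assms by auto
  then have "phi p a \<noteq> 0" "phi p a \<noteq> 1"
    using psi_1[OF q_pos] assms by auto
  then show ?thesis
    using phi psi_less_self[OF q_pos, of "phi p a"] by auto
qed

lemma phi_differentiable:
  assumes a: "a \<in> {0<..<1}"
  shows "phi p differentiable (at a)"
proof -
  have "continuous_on (psi (p * (1 - p)) ` {0..1}) (phi p)"
    using continuous_on_subset[OF psi_continuous_on[OF q_pos], of "{0..1}"] phi_psi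
    by (intro continuous_on_inv) auto
  then have "continuous_on {0<..<1} (phi p)"
    unfolding psi_image[OF q_pos] by (rule continuous_on_subset) auto
  then have cont: "isCont (phi p) a"
    using a by (simp add: continuous_on_eq_continuous_at)
  have "phi p a \<le> 1"
    using phi_greater_self[OF a] by simp
  then obtain D where D: "(psi (p * (1 - p)) has_real_derivative D) (at (phi p a))" "0 < D"
    using psi_has_real_derivative[OF q_pos] psi_derivative_pos[OF q_pos] by blast
  have "(phi p has_real_derivative inverse D) (at a)"
    using a D(2) phi_mem_psi_phi
    by (intro DERIV_inverse_function[OF D(1) _ _ _ _ cont, where a = 0 and b = 1]) auto
  then show ?thesis
    unfolding differentiable_def has_field_derivative_def by blast
qed

lemma f_pos: "x < 1 \<Longrightarrow> 0 < f p x"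
  using p_pos p_less_1 by (simp add: f_def)

lemma ln_f:
  assumes "x < 1"
  shows "ln (f p x) = (2 - x) * ln (2 - x) + ln p + (1 - x) * ln (1 - p) - (1 - x) * ln (1 - x)"
  using assms p_pos p_less_1 by (simp add: f_def ln_mult ln_powr algebra_simps)

lemma ln_Phi_root:
  assumes "0 < a" "a < s" "s < 1" "Phi p a s = 0"
  shows "ln (s - a) = ln a + ln (1 - s) - ln p - ln (1 - p) - 2 * ln (2 - s)"
proof -
  have "p * (1 - p) * (2 - s)^2 * (s - a) = a * (1 - s)"
    using assms(4) by (simp add: Phi_def)
  then have "ln (p * (1 - p) * (2 - s)^2 * (s - a)) = ln (a * (1 - s))"
    by simp
  then show ?thesis
    using assms p_pos p_less_1 by (simp add: ln_mult ln_realpow)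
qed

lemma Phi_root_identity:
  assumes a: "0 < a" "a < s" and s: "s < 1" and root: "Phi p a s = 0"
  shows "s * rpow (f p s) (a / s) / (rpow a (a / s) * rpow (s - a) (1 - a / s))
          = s / (s - a) * rpow ((1 - s) / ((1 - p) * (2 - s))) a"
proof -
  define X where "X = (1 - s) / ((1 - p) * (2 - s))"
  have X: "0 < X" "ln X = ln (1 - s) - ln (1 - p) - ln (2 - s)"
    using s p_less_1 by (simp_all add: X_def ln_div ln_mult)
  txt \<open>The root equation turns the exponent \<open>a / s\<close> of \<open>f p s\<close> into a power of \<open>X\<close>.\<close>
  have key: "ln (f p s) + ln (s - a) - ln a = s * ln X"
    unfolding ln_f[OF s] ln_Phi_root[OF a s root] X(2) by (simp add: algebra_simps)
  have "ln (s * f p s powr (a / s) / (a powr (a / s) * (s - a) powr (1 - a / s)))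
      = ln s + a / s * ln (f p s) - (a / s * ln a + (1 - a / s) * ln (s - a))"
    using a s f_pos[OF s] by (simp add: ln_div ln_mult ln_powr)
  also have "\<dots> = ln s - ln (s - a) + a / s * (ln (f p s) + ln (s - a) - ln a)"
    by (simp add: algebra_simps)
  also have "\<dots> = ln s - ln (s - a) + a * ln X"
    using a by (simp add: key)
  also have "\<dots> = ln (s / (s - a) * X powr a)"
    using a X(1) by (simp add: ln_div ln_mult ln_powr)
  finally show ?thesis
    using a s X(1) f_pos[OF s] by (simp add: X_def[symmetric] ln_inj_iff)
qed

end

theorem lemma14:
  fixes p :: real
  assumes "0 < p" and "p < 1"
  shows
    "(\<forall>a\<in>{0..1}. \<exists>!s. s \<in> {a..1} \<and> Phi p a s = 0)
     \<and> (\<forall>a\<in>{0,1}. phi p a = a)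
     \<and> (\<forall>a\<in>{0<..<1}. 0 < a \<and> a < phi p a \<and> phi p a < 1)
     \<and> (\<forall>a\<in>{0<..<1}. \<forall>s. s = phi p a \<longrightarrow>
          s * rpow (f p s) (a / s) / (rpow a (a / s) * rpow (s - a) (1 - a / s))
          = s / (s - a) * rpow ((1 - s) / ((1 - p) * (2 - s))) a)
     \<and> strict_mono_on {0..1} (phi p)
     \<and> (\<forall>a\<in>{0<..<1}. phi p differentiable (at a))
     \<and> bij_betw (phi p) {0..1} {0..1}
     \<and> strict_mono_on {0..1} (the_inv_into {0..1} (phi p))
     \<and> (\<forall>s\<in>{0,1}. the_inv_into {0..1} (phi p) s = s)
     \<and> (\<forall>s\<in>{0<..<1}. 0 < the_inv_into {0..1} (phi p) s
            \<and> the_inv_into {0..1} (phi p) s < s \<and> s < 1)"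
proof (intro conjI ballI allI impI)
  have q: "0 < p * (1 - p)"
    using assms by simp
  show "\<exists>!s. s \<in> {a..1} \<and> Phi p a s = 0" if "a \<in> {0..1}" for a
    using ex1_Phi_root[OF assms that] .
  show "phi p a = a" if "a \<in> {0, 1}" for a
    using that phi_psi[OF assms, of 0] phi_psi[OF assms, of 1] psi_1[OF q] by auto
  show "0 < a" "a < phi p a" "phi p a < 1" if "a \<in> {0<..<1}" for a
    using that phi_greater_self[OF assms that] by auto
  show "s * rpow (f p s) (a / s) / (rpow a (a / s) * rpow (s - a) (1 - a / s))
          = s / (s - a) * rpow ((1 - s) / ((1 - p) * (2 - s))) a"
    if a: "a \<in> {0<..<1}" and s: "s = phi p a" for a s
    using a s phi_greater_self[OF assms a] Phi_phi[OF assms, of a]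
    by (intro Phi_root_identity[OF assms]) auto
  show "strict_mono_on {0..1} (phi p)"
    by (rule phi_strict_mono_on[OF assms])
  show "phi p differentiable (at a)" if "a \<in> {0<..<1}" for a
    by (rule phi_differentiable[OF assms that])
  show "bij_betw (phi p) {0..1} {0..1}"
    by (rule phi_bij_betw[OF assms])
  show "strict_mono_on {0..1} (the_inv_into {0..1} (phi p))"
    using monotone_on_subset[OF psi_strict_mono_on[OF q], of "{0..1}"] the_inv_into_phi[OF assms]
    by (auto intro!: strict_mono_onI dest: strict_mono_onD)
  show "the_inv_into {0..1} (phi p) s = s" if "s \<in> {0, 1}" for s
    using that the_inv_into_phi[OF assms] psi_1[OF q] by auto
  show "0 < the_inv_into {0..1} (phi p) s" "the_inv_into {0..1} (phi p) s < s" "s < 1"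
    if s: "s \<in> {0<..<1}" for s
    using s the_inv_into_phi[OF assms] psi_less_self[OF q]
      strict_mono_onD[OF psi_strict_mono_on[OF q], of 0 s] by auto
qed

end
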